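(* Let $X\le\mathrm{GL}_m(q)$, let $Y\le\mathrm{Sym}(k)$ be a group of $k\times k$ permutation matrices, and let $H\le X\wr Y\le\mathrm{GL}_{mk}(q)$. Let $A(k)=(y_{ij})$ be the $k\times k$ upper-triangular matrix with $y_{ij}=(-1)^{j-i}$ for $j\ge i$ and $y_{ij}=0$ for $j<i$, and let $x_1,\dots,x_k\in X$ be arbitrary. Define $x\in\mathrm{GL}_{mk}(q)$ as the block matrix whose $(i,j)$ block ($m\times m$) is $y_{ij}x_i$. Let $h=\mathrm{diag}[D_1,\dots,D_k]\cdot s\in H$ with $D_i\in X$ and $s\in Y$. If $h^x\in H$, then $s$ is the identity and $D_j^{x_j}=D_{j+1}^{x_{j+1}}$ for $j=1,\dots,k-1$.
   Context: $X\wr Y$ is the matrix group obtained by replacing the entries $1$ of matrices in $Y$ by arbitrary matrices of $X$ and entries $0$ by zero $m\times m$ matrices; thus $\mathrm{diag}[D_1,\dots,D_k]\cdot s$ is the permutation matrix $s$ with the $1$ in the $j$-th block row replaced by $D_j$. Conjugation: $h^x=x^{-1}hx$, $D^{x_j}=x_j^{-1}Dx_j$. *)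

theory Defs
  imports "Jordan_Normal_Form.Matrix"
begin

definition GL :: "nat \<Rightarrow> 'a::field mat set" where
  "GL n = {A \<in> carrier_mat n n. invertible_mat A}"

definition minv :: "'a::field mat \<Rightarrow> 'a mat" where
  "minv A = (SOME B. B \<in> carrier_mat (dim_row A) (dim_row A) \<and> inverts_mat A B \<and> inverts_mat B A)"

definition mconj :: "'a::field mat \<Rightarrow> 'a mat \<Rightarrow> 'a mat" where
  "mconj h x = minv x * h * x"

definition subgroup_GL :: "nat \<Rightarrow> 'a::field mat set \<Rightarrow> bool" where
  "subgroup_GL n S \<longleftrightarrow> S \<subseteq> GL n \<and> 1\<^sub>m n \<in> S \<and>
     (\<forall>A\<in>S. \<forall>B\<in>S. A * B \<in> S) \<and> (\<forall>A\<in>S. minv A \<in> S)"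

definition perm_mat :: "nat \<Rightarrow> (nat \<Rightarrow> nat) \<Rightarrow> 'a::field mat" where
  "perm_mat k \<sigma> = mat k k (\<lambda>(i,j). if j = \<sigma> i then 1 else 0)"

definition perm_mats :: "nat \<Rightarrow> 'a::field mat set" where
  "perm_mats k = {perm_mat k \<sigma> | \<sigma>. \<sigma> permutes {0..<k}}"

text \<open>diag[D_0,...,D_{k-1}] * s for m x m blocks D_i and a k x k matrix s:
  the (i,j) block is s_{ij} D_i.\<close>
definition blockmono :: "nat \<Rightarrow> nat \<Rightarrow> (nat \<Rightarrow> 'a::field mat) \<Rightarrow> 'a mat \<Rightarrow> 'a mat" where
  "blockmono m k D s = mat (m*k) (m*k)
     (\<lambda>(r,c). s $$ (r div m, c div m) * D (r div m) $$ (r mod m, c mod m))"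

definition wr :: "nat \<Rightarrow> nat \<Rightarrow> 'a::field mat set \<Rightarrow> 'a mat set \<Rightarrow> 'a mat set" where
  "wr m k X Y = {blockmono m k D s | D s. s \<in> Y \<and> (\<forall>i<k. D i \<in> X)}"

definition Amat :: "nat \<Rightarrow> 'a::field mat" where
  "Amat k = mat k k (\<lambda>(i,j). if i \<le> j then (-1) ^ (j - i) else 0)"

definition xmat :: "nat \<Rightarrow> nat \<Rightarrow> (nat \<Rightarrow> 'a::field mat) \<Rightarrow> 'a mat" where
  "xmat m k xs = mat (m*k) (m*k)
     (\<lambda>(r,c). Amat k $$ (r div m, c div m) * xs (r div m) $$ (r mod m, c mod m))"

end

theory Submission
  imports Defs "Jordan_Normal_Form.Determinant"
begin

(*
  Write h = diag[D_i] s and h^x = diag[F_i] t with s, t the permutation matrices of sigma, p.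
  Comparing the (i,j) blocks of x h^x = h x gives
    y(i, p^-1 j) x_i F(p^-1 j) = y(sigma i, j) D_i x(sigma i),
  and the matrix factors are invertible, so the two scalars vanish together. As y(i,j) = 0
  exactly for j < i, this says sigma i <= j <-> i <= p^-1 j: sigma and p^-1 form a Galois
  connection on {0..<k}, which for permutations of a finite chain forces both to be the
  identity. Then the blocks (j, j+1) and (j+1, j+1) read x_j F(j+1) = D_j x_j and
  x(j+1) F(j+1) = D(j+1) x(j+1), so D_j^x_j = F(j+1) = D(j+1)^x(j+1).
*)

lemma sum_blocks_nat:
  fixes f :: "nat \<Rightarrow> 'a::comm_monoid_add"
  shows "(\<Sum>t<k*m. f t) = (\<Sum>l<k. \<Sum>u<m. f (l*m+u))"
proof -
  have "(\<Sum>u<m. f (l*m+u)) = sum f {l*m..<l*m+m}" for l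
    by (simp add: sum.shift_bounds_nat_ivl[of f 0 "l*m" m, simplified] atLeast0LessThan add.commute)
  then show ?thesis by (simp add: sum.nat_group)
qed

lemma block_index_less:
  fixes i a m k :: nat
  assumes "i < k" "a < m"
  shows "i*m + a < m*k"
proof -
  have "i*m + a < (i+1)*m" using assms(2) by simp
  also have "\<dots> \<le> k*m" using assms(1) by (intro mult_right_mono) auto
  finally show ?thesis by (simp add: mult.commute)
qed

definition block :: "nat \<Rightarrow> 'a mat \<Rightarrow> nat \<Rightarrow> nat \<Rightarrow> 'a mat" where
  "block m M i j = mat m m (\<lambda>(a,b). M $$ (i*m+a, j*m+b))"

definition scaled_block_mat :: "nat \<Rightarrow> nat \<Rightarrow> 'a::times mat \<Rightarrow> (nat \<Rightarrow> nat \<Rightarrow> 'a mat) \<Rightarrow> 'a mat" where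
  "scaled_block_mat m k S B = mat (m*k) (m*k)
     (\<lambda>(r,c). S $$ (r div m, c div m) * B (r div m) (c div m) $$ (r mod m, c mod m))"

lemma dim_block [simp]: "dim_row (block m M i j) = m" "dim_col (block m M i j) = m"
  by (simp_all add: block_def)

lemma block_carrier [simp]: "block m M i j \<in> carrier_mat m m"
  by (simp add: carrier_matI)

lemma index_block [simp]: "a < m \<Longrightarrow> b < m \<Longrightarrow> block m M i j $$ (a,b) = M $$ (i*m+a, j*m+b)"
  by (simp add: block_def)

lemma block_mult_index:
  fixes P Q :: "'a::comm_semiring_0 mat"
  assumes "P \<in> carrier_mat (m*k) (m*k)" "Q \<in> carrier_mat (m*k) (m*k)"
    and "i < k" "j < k" "a < m" "b < m"
  shows "block m (P*Q) i j $$ (a,b) = (\<Sum>l<k. (block m P i l * block m Q l j) $$ (a,b))"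
proof -
  have "block m (P*Q) i j $$ (a,b) = (\<Sum>t<k*m. P $$ (i*m+a, t) * Q $$ (t, j*m+b))"
    using assms block_index_less[of i k a m] block_index_less[of j k b m]
    by (simp add: scalar_prod_def atLeast0LessThan mult.commute)
  also have "\<dots> = (\<Sum>l<k. \<Sum>u<m. P $$ (i*m+a, l*m+u) * Q $$ (l*m+u, j*m+b))"
    by (rule sum_blocks_nat)
  also have "\<dots> = (\<Sum>l<k. (block m P i l * block m Q l j) $$ (a,b))"
    using assms by (intro sum.cong) (simp_all add: scalar_prod_def atLeast0LessThan)
  finally show ?thesis .
qed

lemma mat_eq_blocksI:
  assumes "P \<in> carrier_mat (m*k) (m*k)" "Q \<in> carrier_mat (m*k) (m*k)"
    and "\<And>i j. i < k \<Longrightarrow> j < k \<Longrightarrow> block m P i j = block m Q i j"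
  shows "P = Q"
proof (rule eq_matI)
  fix r c assume "r < dim_row Q" "c < dim_col Q"
  then have rc: "r < k*m" "c < k*m" using assms(2) by (auto simp: mult.commute)
  then have "0 < m" by (cases m) auto
  define i a j b where "i = r div m" "a = r mod m" "j = c div m" "b = c mod m"
  have idx: "i < k" "j < k" "a < m" "b < m"
    using rc \<open>0 < m\<close> by (simp_all add: i_a_j_b_def less_mult_imp_div_less)
  have "r = i*m+a" "c = j*m+b" by (simp_all add: i_a_j_b_def)
  then show "P $$ (r,c) = Q $$ (r,c)"
    using assms(3)[OF idx(1,2)] index_block[OF idx(3,4), of _ i j] by metis
qed (use assms in auto)

lemma block_one_mat:
  assumes "i < k" "j < k"
  shows "block m (1\<^sub>m (m*k)) i j = (if i = j then 1\<^sub>m m else 0\<^sub>m m m)"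
proof (rule eq_matI)
  fix a b assume "a < dim_row (if i = j then 1\<^sub>m m else 0\<^sub>m m m :: 'a mat)"
    "b < dim_col (if i = j then 1\<^sub>m m else 0\<^sub>m m m :: 'a mat)"
  then have ab: "a < m" "b < m" by (auto split: if_splits)
  have "i*m+a = j*m+b \<longleftrightarrow> i = j \<and> a = b"
  proof
    assume eq: "i*m+a = j*m+b"
    then have "(i*m+a) div m = (j*m+b) div m" "(i*m+a) mod m = (j*m+b) mod m" by simp_all
    then show "i = j \<and> a = b" using ab by simp
  qed simp
  then show "block m (1\<^sub>m (m*k)) i j $$ (a,b) = (if i = j then 1\<^sub>m m else 0\<^sub>m m m :: 'a mat) $$ (a,b)"
    using assms ab block_index_less[of i k a m] block_index_less[of j k b m] by auto
qed auto

lemma scaled_block_mat_carrier [simp]: "scaled_block_mat m k S B \<in> carrier_mat (m*k) (m*k)"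
  by (simp add: scaled_block_mat_def)

lemma block_scaled_block_mat:
  assumes "i < k" "j < k" "B i j \<in> carrier_mat m m"
  shows "block m (scaled_block_mat m k S B) i j = S $$ (i,j) \<cdot>\<^sub>m B i j"
  using assms block_index_less[of i k _ m] block_index_less[of j k _ m]
  by (intro eq_matI) (auto simp: scaled_block_mat_def)

lemma index_perm_mat:
  "i < k \<Longrightarrow> j < k \<Longrightarrow> perm_mat k \<sigma> $$ (i,j) = (if j = \<sigma> i then 1 else 0)"
  by (simp add: perm_mat_def)

lemma permutes_less:
  fixes i k :: nat
  assumes "\<sigma> permutes {0..<k}" "i < k"
  shows "\<sigma> i < k" "inv_into UNIV \<sigma> i < k"
  using permutes_in_image[OF assms(1), THEN iffD2, of i]
    permutes_in_image[OF permutes_inv[OF assms(1)], THEN iffD2, of i] assms(2)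
  by simp_all

lemma sum_perm_mat_row:
  assumes "\<sigma> permutes {0..<k}" "i < k"
  shows "(\<Sum>l<k. perm_mat k \<sigma> $$ (i,l) * f l) = f (\<sigma> i)"
proof -
  have "(\<Sum>l<k. perm_mat k \<sigma> $$ (i,l) * f l) = (\<Sum>l<k. if l = \<sigma> i then f l else 0)"
    using assms(2) by (intro sum.cong) (auto simp: index_perm_mat)
  then show ?thesis using permutes_less[OF assms] by simp
qed

lemma sum_perm_mat_col:
  assumes "p permutes {0..<k}" "j < k"
  shows "(\<Sum>l<k. perm_mat k p $$ (l,j) * f l) = f (inv_into UNIV p j)"
proof -
  have "(\<Sum>l<k. perm_mat k p $$ (l,j) * f l) = (\<Sum>l<k. if l = inv_into UNIV p j then f l else 0)"
  proof (rule sum.cong[OF refl])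
    fix l assume "l \<in> {..<k}"
    moreover have "j = p l \<longleftrightarrow> l = inv_into UNIV p j" using permutes_inv_eq[OF assms(1)] by metis
    ultimately show "perm_mat k p $$ (l,j) * f l = (if l = inv_into UNIV p j then f l else 0)"
      using assms(2) by (simp add: index_perm_mat)
  qed
  also have "\<dots> = f (inv_into UNIV p j)"
    using permutes_less(2)[OF assms] by (simp only: sum.delta finite_lessThan lessThan_iff if_True)
  finally show ?thesis .
qed

lemma blockmono_eq_scaled_block_mat: "blockmono m k D s = scaled_block_mat m k s (\<lambda>i _. D i)"
  by (simp add: blockmono_def scaled_block_mat_def)

lemma block_perm_mult:
  fixes Q :: "'a::field mat"
  assumes \<sigma>: "\<sigma> permutes {0..<k}" and D: "D i \<in> carrier_mat m m"
    and Q: "Q \<in> carrier_mat (m*k) (m*k)" and ij: "i < k" "j < k"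
  shows "block m (blockmono m k D (perm_mat k \<sigma>) * Q) i j = D i * block m Q (\<sigma> i) j"
proof (rule eq_matI)
  fix a b assume "a < dim_row (D i * block m Q (\<sigma> i) j)" "b < dim_col (D i * block m Q (\<sigma> i) j)"
  then have ab: "a < m" "b < m" using D by auto
  have "block m (blockmono m k D (perm_mat k \<sigma>) * Q) i j $$ (a,b)
      = (\<Sum>l<k. (block m (blockmono m k D (perm_mat k \<sigma>)) i l * block m Q l j) $$ (a,b))"
    using ij ab Q by (intro block_mult_index) (simp_all add: blockmono_eq_scaled_block_mat)
  also have "\<dots> = (\<Sum>l<k. perm_mat k \<sigma> $$ (i,l) * (D i * block m Q l j) $$ (a,b))"
  proof (rule sum.cong[OF refl])
    fix l assume "l \<in> {..<k}"
    then show "(block m (blockmono m k D (perm_mat k \<sigma>)) i l * block m Q l j) $$ (a,b)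
        = perm_mat k \<sigma> $$ (i,l) * (D i * block m Q l j) $$ (a,b)"
      using ij ab D by (simp add: blockmono_eq_scaled_block_mat block_scaled_block_mat
          mult_smult_assoc_mat[OF D block_carrier])
  qed
  also have "\<dots> = (D i * block m Q (\<sigma> i) j) $$ (a,b)"
    by (rule sum_perm_mat_row[OF \<sigma> ij(1)])
  finally show "block m (blockmono m k D (perm_mat k \<sigma>) * Q) i j $$ (a,b)
      = (D i * block m Q (\<sigma> i) j) $$ (a,b)" .
qed (use D in auto)

lemma block_mult_perm:
  fixes P :: "'a::field mat"
  assumes p: "p permutes {0..<k}" and F: "\<And>l. l < k \<Longrightarrow> F l \<in> carrier_mat m m"
    and P: "P \<in> carrier_mat (m*k) (m*k)" and ij: "i < k" "j < k"
  shows "block m (P * blockmono m k F (perm_mat k p)) i j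
    = block m P i (inv_into UNIV p j) * F (inv_into UNIV p j)"
proof (rule eq_matI)
  have Fj: "F (inv_into UNIV p j) \<in> carrier_mat m m" using F permutes_less(2)[OF p ij(2)] .
  fix a b assume "a < dim_row (block m P i (inv_into UNIV p j) * F (inv_into UNIV p j))"
    "b < dim_col (block m P i (inv_into UNIV p j) * F (inv_into UNIV p j))"
  then have ab: "a < m" "b < m" using Fj by auto
  have "block m (P * blockmono m k F (perm_mat k p)) i j $$ (a,b)
      = (\<Sum>l<k. (block m P i l * block m (blockmono m k F (perm_mat k p)) l j) $$ (a,b))"
    using ij ab P by (intro block_mult_index) (simp_all add: blockmono_eq_scaled_block_mat)
  also have "\<dots> = (\<Sum>l<k. perm_mat k p $$ (l,j) * (block m P i l * F l) $$ (a,b))"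
  proof (rule sum.cong[OF refl])
    fix l assume "l \<in> {..<k}"
    then have l: "l < k" by simp
    then show "(block m P i l * block m (blockmono m k F (perm_mat k p)) l j) $$ (a,b)
        = perm_mat k p $$ (l,j) * (block m P i l * F l) $$ (a,b)"
      using ij ab F[OF l] by (simp add: blockmono_eq_scaled_block_mat block_scaled_block_mat
          mult_smult_distrib[OF block_carrier F[OF l]])
  qed
  also have "\<dots> = (block m P i (inv_into UNIV p j) * F (inv_into UNIV p j)) $$ (a,b)"
    by (rule sum_perm_mat_col[OF p ij(2)])
  finally show "block m (P * blockmono m k F (perm_mat k p)) i j $$ (a,b)
      = (block m P i (inv_into UNIV p j) * F (inv_into UNIV p j)) $$ (a,b)" .
qed (use F permutes_less(2)[OF p ij(2)] in auto)

lemma GL_carrier: "A \<in> GL n \<Longrightarrow> A \<in> carrier_mat n n"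
  by (simp add: GL_def)

lemma GL_minv:
  fixes A :: "'a::field mat"
  assumes "A \<in> GL n"
  shows "minv A \<in> carrier_mat n n" "A * minv A = 1\<^sub>m n" "minv A * A = 1\<^sub>m n"
proof -
  have A: "A \<in> carrier_mat n n" "invertible_mat A" using assms by (simp_all add: GL_def)
  then obtain B where B: "inverts_mat A B" "inverts_mat B A"
    unfolding invertible_mat_def by blast
  have AB: "A * B = 1\<^sub>m n" using B(1) A(1) by (simp add: inverts_mat_def)
  have BA: "B * A = 1\<^sub>m (dim_row B)" using B(2) by (simp add: inverts_mat_def)
  have "dim_col B = n" using arg_cong[OF AB, of dim_col] by simp
  moreover have "dim_row B = n" using arg_cong[OF BA, of dim_col] A(1) by simp
  ultimately have "B \<in> carrier_mat (dim_row A) (dim_row A) \<and> inverts_mat A B \<and> inverts_mat B A"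
    using A(1) B by auto
  then have "minv A \<in> carrier_mat (dim_row A) (dim_row A) \<and> inverts_mat A (minv A) \<and> inverts_mat (minv A) A"
    unfolding minv_def by (rule someI)
  then show "minv A \<in> carrier_mat n n" "A * minv A = 1\<^sub>m n" "minv A * A = 1\<^sub>m n"
    using A(1) by (auto simp: inverts_mat_def)
qed

lemma GL_of_right_inverse:
  fixes A B :: "'a::field mat"
  assumes "A \<in> carrier_mat n n" "B \<in> carrier_mat n n" "A * B = 1\<^sub>m n"
  shows "A \<in> GL n"
proof -
  have "B * A = 1\<^sub>m n" by (rule mat_mult_left_right_inverse[OF assms])
  then show ?thesis using assms by (auto simp: GL_def invertible_mat_def inverts_mat_def)
qed

lemma GL_mult:
  fixes A B :: "'a::field mat"
  assumes "A \<in> GL n" "B \<in> GL n"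
  shows "A * B \<in> GL n"
proof (rule GL_of_right_inverse)
  note A = GL_carrier[OF assms(1)] GL_minv[OF assms(1)]
  and B = GL_carrier[OF assms(2)] GL_minv[OF assms(2)]
  have "(A * B) * (minv B * minv A) = A * ((B * minv B) * minv A)"
    using A(1,2) B(1,2) by (simp add: assoc_mult_mat[of _ n n _ n _ n])
  also have "\<dots> = 1\<^sub>m n" using A B by simp
  finally show "(A * B) * (minv B * minv A) = 1\<^sub>m n" .
qed (use GL_carrier[OF assms(1)] GL_carrier[OF assms(2)] GL_minv(1)[OF assms(1)]
    GL_minv(1)[OF assms(2)] in auto)

lemma GL_smult_eq_zero_iff:
  fixes A :: "'a::field mat"
  assumes "A \<in> GL n" "0 < n"
  shows "c \<cdot>\<^sub>m A = 0\<^sub>m n n \<longleftrightarrow> c = 0"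
proof
  assume cA: "c \<cdot>\<^sub>m A = 0\<^sub>m n n"
  have A: "A \<in> carrier_mat n n" using assms(1) by (rule GL_carrier)
  have "c \<cdot>\<^sub>m 1\<^sub>m n = (c \<cdot>\<^sub>m A) * minv A"
    using A GL_minv[OF assms(1)] by (simp add: mult_smult_assoc_mat)
  also have "\<dots> = 0\<^sub>m n n" using cA GL_minv(1)[OF assms(1)] by simp
  finally have "(c \<cdot>\<^sub>m 1\<^sub>m n) $$ (0,0) = (0\<^sub>m n n :: 'a mat) $$ (0,0)" by simp
  then show "c = 0" using assms(2) by simp
qed (use GL_carrier[OF assms(1)] in auto)

lemma smult_GL_eq_smult_GL_zero_iff:
  fixes A B :: "'a::field mat"
  assumes "c \<cdot>\<^sub>m A = d \<cdot>\<^sub>m B" "A \<in> GL n" "B \<in> GL n" "0 < n"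
  shows "c = 0 \<longleftrightarrow> d = 0"
proof -
  have "0 \<cdot>\<^sub>m A = 0\<^sub>m n n" "0 \<cdot>\<^sub>m B = 0\<^sub>m n n"
    using GL_carrier[OF assms(2)] GL_carrier[OF assms(3)] by (auto intro!: eq_matI)
  then show ?thesis
    using assms(1) GL_smult_eq_zero_iff[OF assms(2,4)] GL_smult_eq_zero_iff[OF assms(3,4)] by metis
qed

lemma smult_mat_cancel:
  fixes A B :: "'a::field mat"
  assumes "c \<cdot>\<^sub>m A = c \<cdot>\<^sub>m B" "c \<noteq> 0"
  shows "A = B"
proof -
  have "A = inverse c \<cdot>\<^sub>m (c \<cdot>\<^sub>m A)" "B = inverse c \<cdot>\<^sub>m (c \<cdot>\<^sub>m B)"
    using assms(2) by (auto intro!: eq_matI)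
  then show ?thesis using assms(1) by simp
qed

lemma mult_mconj:
  fixes P R :: "'a::field mat"
  assumes "P \<in> GL n" "R \<in> carrier_mat n n"
  shows "P * mconj R P = R * P"
proof -
  note P = GL_carrier[OF assms(1)] GL_minv[OF assms(1)]
  have "P * mconj R P = P * (minv P * (R * P))"
    unfolding mconj_def using P(1,2) assms(2) by (simp add: assoc_mult_mat[of _ n n _ n _ n])
  also have "\<dots> = (P * minv P) * (R * P)"
    using P(1,2) assms(2) by (intro assoc_mult_mat[symmetric]) auto
  also have "\<dots> = R * P" using P assms(2) by simp
  finally show ?thesis .
qed

lemma mconj_eqI:
  fixes P Q R :: "'a::field mat"
  assumes "P \<in> GL n" "Q \<in> carrier_mat n n" "R \<in> carrier_mat n n" "P * Q = R * P"
  shows "mconj R P = Q"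
proof -
  note P = GL_carrier[OF assms(1)] GL_minv[OF assms(1)]
  have "mconj R P = minv P * (R * P)"
    unfolding mconj_def using P assms(3) by (simp add: assoc_mult_mat[of _ n n _ n _ n])
  also have "\<dots> = (minv P * P) * Q"
    unfolding assms(4)[symmetric] using P(1,2) assms(2) by (intro assoc_mult_mat[symmetric]) auto
  also have "\<dots> = Q" using P assms(2) by simp
  finally show ?thesis .
qed

lemma Amat_eq_0_iff: "i < k \<Longrightarrow> j < k \<Longrightarrow> (Amat k $$ (i,j) :: 'a::field) = 0 \<longleftrightarrow> j < i"
  by (simp add: Amat_def)

text \<open>\<open>Amat k = (1 + N)\<^sup>-\<^sup>1\<close> for the nilpotent shift \<open>N\<close>, so its inverse is \<open>1 + N\<close>.\<close>

definition Amat_inv :: "nat \<Rightarrow> 'a::field mat" where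
  "Amat_inv k = mat k k (\<lambda>(i,j). if j = i \<or> j = i + 1 then 1 else 0)"

lemma Amat_mult_Amat_inv: "Amat k * Amat_inv k = (1\<^sub>m k :: 'a::field mat)"
proof (rule eq_matI)
  fix i j assume "i < dim_row (1\<^sub>m k :: 'a mat)" "j < dim_col (1\<^sub>m k :: 'a mat)"
  then have ij: "i < k" "j < k" by simp_all
  have "(Amat k * Amat_inv k :: 'a mat) $$ (i,j) = (\<Sum>l<k. Amat k $$ (i,l) * Amat_inv k $$ (l,j))"
    using ij by (simp add: Amat_def Amat_inv_def scalar_prod_def atLeast0LessThan)
  also have "\<dots> = (\<Sum>l<k. (if l = j then Amat k $$ (i,l) else 0)
               + (if l = j - 1 \<and> 0 < j then Amat k $$ (i,l) else (0::'a)))"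
    using ij by (intro sum.cong) (auto simp: Amat_inv_def)
  also have "\<dots> = Amat k $$ (i,j) + (if 0 < j then Amat k $$ (i,j-1) else 0)"
    using ij by (simp add: sum.distrib sum.If_cases)
  also have "\<dots> = 1\<^sub>m k $$ (i,j)"
  proof (cases "i < j")
    case True
    then have "j - i = Suc (j - 1 - i)" by simp
    then show ?thesis using True ij by (simp add: Amat_def)
  next
    case False
    then show ?thesis using ij by (auto simp: Amat_def)
  qed
  finally show "(Amat k * Amat_inv k) $$ (i,j) = (1\<^sub>m k :: 'a mat) $$ (i,j)" .
qed (simp_all add: Amat_def Amat_inv_def)

lemma xmat_eq_scaled_block_mat: "xmat m k xs = scaled_block_mat m k (Amat k) (\<lambda>i _. xs i)"
  by (simp add: xmat_def scaled_block_mat_def)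

lemma block_xmat:
  assumes "i < k" "j < k" "xs i \<in> carrier_mat m m"
  shows "block m (xmat m k xs) i j = Amat k $$ (i,j) \<cdot>\<^sub>m xs i"
  using assms by (simp add: xmat_eq_scaled_block_mat block_scaled_block_mat)

lemma xmat_GL:
  fixes xs :: "nat \<Rightarrow> 'a::field mat"
  assumes xs: "\<And>i. i < k \<Longrightarrow> xs i \<in> GL m"
  shows "xmat m k xs \<in> GL (m*k)"
proof -
  define Y where "Y = scaled_block_mat m k (Amat_inv k) (\<lambda>_ j. minv (xs j))"
  have X: "xmat m k xs \<in> carrier_mat (m*k) (m*k)" and Y: "Y \<in> carrier_mat (m*k) (m*k)"
    by (simp_all add: xmat_eq_scaled_block_mat Y_def)
  have XY: "xmat m k xs * Y = 1\<^sub>m (m*k)"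
  proof (rule mat_eq_blocksI)
    fix i j assume ij: "i < k" "j < k"
    note xi = GL_carrier[OF xs[OF ij(1)]] and yj = GL_minv[OF xs[OF ij(2)]]
    show "block m (xmat m k xs * Y) i j = block m (1\<^sub>m (m*k)) i j"
    proof (rule eq_matI)
      fix a b assume "a < dim_row (block m (1\<^sub>m (m*k)) i j :: 'a mat)"
        "b < dim_col (block m (1\<^sub>m (m*k)) i j :: 'a mat)"
      then have ab: "a < m" "b < m" by simp_all
      have "block m (xmat m k xs * Y) i j $$ (a,b)
          = (\<Sum>l<k. (block m (xmat m k xs) i l * block m Y l j) $$ (a,b))"
        using ij ab by (intro block_mult_index X Y)
      also have "\<dots> = (\<Sum>l<k. Amat k $$ (i,l) * Amat_inv k $$ (l,j) * (xs i * minv (xs j)) $$ (a,b))"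
        using ij ab xi yj
        by (intro sum.cong) (simp_all add: block_xmat Y_def block_scaled_block_mat
            mult_smult_assoc_mat mult_smult_distrib)
      also have "\<dots> = (Amat k * Amat_inv k) $$ (i,j) * (xs i * minv (xs j)) $$ (a,b)"
        using ij by (simp add: sum_distrib_right Amat_def Amat_inv_def scalar_prod_def atLeast0LessThan)
      also have "\<dots> = block m (1\<^sub>m (m*k)) i j $$ (a,b)"
        using ij ab yj by (simp add: Amat_mult_Amat_inv block_one_mat)
      finally show "block m (xmat m k xs * Y) i j $$ (a,b) = block m (1\<^sub>m (m*k)) i j $$ (a,b)" .
    qed simp_all
  qed (simp_all add: mult_carrier_mat[OF X Y])
  then show ?thesis by (rule GL_of_right_inverse[OF X Y])
qed

lemma permutes_galois_connection_id:
  fixes \<sigma> \<tau> :: "nat \<Rightarrow> nat"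
  assumes \<sigma>: "\<sigma> permutes {0..<k}" and \<tau>: "\<tau> permutes {0..<k}"
    and galois: "\<And>i j. i < k \<Longrightarrow> j < k \<Longrightarrow> \<sigma> i \<le> j \<longleftrightarrow> i \<le> \<tau> j"
    and i: "i < k"
  shows "\<sigma> i = i \<and> \<tau> i = i"
proof -
  have \<sigma>_id: "\<sigma> l = l" if l: "l < k" for l
  proof -
    txt \<open>\<open>\<tau>\<close> maps the upper set \<open>{\<sigma> l..<k}\<close> onto \<open>{l..<k}\<close>; compare sizes.\<close>
    have "\<tau> ` {\<sigma> l..<k} = {l..<k}"
    proof
      show "\<tau> ` {\<sigma> l..<k} \<subseteq> {l..<k}"
        using galois[OF l] permutes_less(1)[OF \<tau>] by auto
      show "{l..<k} \<subseteq> \<tau> ` {\<sigma> l..<k}"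
      proof
        fix j assume j: "j \<in> {l..<k}"
        have "\<tau> (inv_into UNIV \<tau> j) = j" by (rule permutes_inverses(1)[OF \<tau>])
        moreover have "inv_into UNIV \<tau> j \<in> {\<sigma> l..<k}"
          using galois[OF l permutes_less(2)[OF \<tau>]] permutes_less(2)[OF \<tau>, of j] j calculation
          by auto
        ultimately show "j \<in> \<tau> ` {\<sigma> l..<k}" by (metis imageI)
      qed
    qed
    moreover have "card (\<tau> ` {\<sigma> l..<k}) = card {\<sigma> l..<k}"
      by (rule card_image[OF inj_on_subset[OF permutes_inj[OF \<tau>]]]) simp
    ultimately have "card {\<sigma> l..<k} = card {l..<k}" by simp
    then show ?thesis using permutes_less(1)[OF \<sigma> l] l by simp
  qed
  have "i \<le> \<tau> i" using galois[OF i i] \<sigma>_id[OF i] by simp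
  moreover have "\<tau> i \<le> i"
    using galois[OF permutes_less(1)[OF \<tau> i] i] \<sigma>_id[OF permutes_less(1)[OF \<tau> i]] by simp
  ultimately show ?thesis using \<sigma>_id[OF i] by simp
qed

locale xmat_intertwining =
  fixes m k :: nat and xs D F :: "nat \<Rightarrow> 'a::field mat" and \<sigma> p :: "nat \<Rightarrow> nat"
  assumes m_pos: "0 < m"
    and \<sigma>: "\<sigma> permutes {0..<k}" and p: "p permutes {0..<k}"
    and xs_GL: "\<And>l. l < k \<Longrightarrow> xs l \<in> GL m"
    and D_GL: "\<And>l. l < k \<Longrightarrow> D l \<in> GL m"
    and F_GL: "\<And>l. l < k \<Longrightarrow> F l \<in> GL m"
    and intertwines: "xmat m k xs * blockmono m k F (perm_mat k p)
      = blockmono m k D (perm_mat k \<sigma>) * xmat m k xs"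
begin

lemma blocks:
  assumes ij: "i < k" "j < k"
  shows "Amat k $$ (i, inv_into UNIV p j) \<cdot>\<^sub>m (xs i * F (inv_into UNIV p j))
    = Amat k $$ (\<sigma> i, j) \<cdot>\<^sub>m (D i * xs (\<sigma> i))"
proof -
  have X: "xmat m k xs \<in> carrier_mat (m*k) (m*k)" by (simp add: xmat_eq_scaled_block_mat)
  have xs: "xs l \<in> carrier_mat m m" and D: "D l \<in> carrier_mat m m"
    and F: "F l \<in> carrier_mat m m" if "l < k" for l
    using GL_carrier[OF xs_GL[OF that]] GL_carrier[OF D_GL[OF that]] GL_carrier[OF F_GL[OF that]] .
  note \<tau>j = permutes_less(2)[OF p ij(2)] and \<sigma>i = permutes_less(1)[OF \<sigma> ij(1)]
  have "Amat k $$ (i, inv_into UNIV p j) \<cdot>\<^sub>m (xs i * F (inv_into UNIV p j))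
      = block m (xmat m k xs * blockmono m k F (perm_mat k p)) i j"
    using block_mult_perm[OF p F X ij] xs[OF ij(1)] F[OF \<tau>j] \<tau>j ij
    by (simp add: block_xmat mult_smult_assoc_mat)
  also have "\<dots> = block m (blockmono m k D (perm_mat k \<sigma>) * xmat m k xs) i j"
    by (simp only: intertwines)
  also have "\<dots> = Amat k $$ (\<sigma> i, j) \<cdot>\<^sub>m (D i * xs (\<sigma> i))"
    using block_perm_mult[where D = D and i = i, OF \<sigma> D[OF ij(1)] X ij] xs[OF \<sigma>i] D[OF ij(1)] \<sigma>i ij
    by (simp add: block_xmat mult_smult_distrib)
  finally show ?thesis .
qed

lemma galois_connection:
  assumes ij: "i < k" "j < k"
  shows "\<sigma> i \<le> j \<longleftrightarrow> i \<le> inv_into UNIV p j"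
proof -
  have \<sigma>i: "\<sigma> i < k" and \<tau>j: "inv_into UNIV p j < k"
    using permutes_less[OF \<sigma> ij(1)] permutes_less[OF p ij(2)] by simp_all
  have "xs i * F (inv_into UNIV p j) \<in> GL m" "D i * xs (\<sigma> i) \<in> GL m"
    using GL_mult[OF xs_GL[OF ij(1)] F_GL[OF \<tau>j]] GL_mult[OF D_GL[OF ij(1)] xs_GL[OF \<sigma>i]] .
  from smult_GL_eq_smult_GL_zero_iff[OF blocks[OF ij] this m_pos] show ?thesis
    using ij \<sigma>i \<tau>j by (simp add: Amat_eq_0_iff not_less[symmetric])
qed

lemma permutations_id:
  assumes "i < k"
  shows "\<sigma> i = i \<and> inv_into UNIV p i = i"
  using \<sigma> permutes_inv[OF p] galois_connection assms by (rule permutes_galois_connection_id)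

lemma conj_eq:
  assumes j: "j + 1 < k"
  shows "mconj (D j) (xs j) = mconj (D (j+1)) (xs (j+1))"
proof -
  have jk: "j < k" using j by simp
  have F: "F (j+1) \<in> carrier_mat m m" using GL_carrier[OF F_GL[OF j]] .
  have D: "D l \<in> carrier_mat m m" if "l < k" for l using GL_carrier[OF D_GL[OF that]] .
  have "(-1) \<cdot>\<^sub>m (xs j * F (j+1)) = (-1) \<cdot>\<^sub>m (D j * xs j)"
    using blocks[OF jk j] permutations_id[OF jk] permutations_id[OF j] j by (simp add: Amat_def)
  then have "xs j * F (j+1) = D j * xs j" by (rule smult_mat_cancel) simp
  then have "mconj (D j) (xs j) = F (j+1)"
    by (rule mconj_eqI[OF xs_GL[OF jk] F D[OF jk]])
  moreover have "1 \<cdot>\<^sub>m (xs (j+1) * F (j+1)) = 1 \<cdot>\<^sub>m (D (j+1) * xs (j+1))"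
    using blocks[OF j j] permutations_id[OF j] j by (simp add: Amat_def)
  then have "xs (j+1) * F (j+1) = D (j+1) * xs (j+1)" by (rule smult_mat_cancel) simp
  then have "mconj (D (j+1)) (xs (j+1)) = F (j+1)"
    by (rule mconj_eqI[OF xs_GL[OF j] F D[OF j]])
  ultimately show ?thesis by simp
qed

end

theorem mainTheorem15:
  fixes X Y H :: "'a::{field,finite} mat set"
    and m k :: nat and xs D :: "nat \<Rightarrow> 'a mat" and s h :: "'a mat"
  assumes "0 < m" and "0 < k"
    and "subgroup_GL m X"
    and "subgroup_GL k Y" and "Y \<subseteq> perm_mats k"
    and "subgroup_GL (m*k) H" and "H \<subseteq> wr m k X Y"
    and "\<forall>i<k. xs i \<in> X"
    and "\<forall>i<k. D i \<in> X" and "s \<in> Y"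
    and "h = blockmono m k D s" and "h \<in> H"
    and "mconj h (xmat m k xs) \<in> H"
  shows "s = 1\<^sub>m k \<and>
    (\<forall>j. j + 1 < k \<longrightarrow> mconj (D j) (xs j) = mconj (D (j+1)) (xs (j+1)))"
proof -
  have XGL: "X \<subseteq> GL m" using assms(3) unfolding subgroup_GL_def by auto
  obtain \<sigma> where \<sigma>: "\<sigma> permutes {0..<k}" and s: "s = perm_mat k \<sigma>"
    using assms(5,10) unfolding perm_mats_def by auto
  have "mconj h (xmat m k xs) \<in> wr m k X Y" using assms(7,13) by auto
  then obtain F t where F: "\<forall>l<k. F l \<in> X" and "t \<in> Y"
    and hx: "mconj h (xmat m k xs) = blockmono m k F t"
    unfolding wr_def by auto
  then obtain p where p: "p permutes {0..<k}" and t: "t = perm_mat k p"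
    using assms(5) unfolding perm_mats_def by auto
  have x_GL: "xmat m k xs \<in> GL (m*k)" using xmat_GL assms(8) XGL by blast
  have "h \<in> carrier_mat (m*k) (m*k)" by (simp add: assms(11) blockmono_eq_scaled_block_mat)
  then have "xmat m k xs * mconj h (xmat m k xs) = h * xmat m k xs" by (rule mult_mconj[OF x_GL])
  then have "xmat m k xs * blockmono m k F (perm_mat k p) = blockmono m k D (perm_mat k \<sigma>) * xmat m k xs"
    using hx t assms(11) s by simp
  then interpret xmat_intertwining m k xs D F \<sigma> p
    using assms(1,8,9) XGL \<sigma> p F by unfold_locales auto
  have "s = 1\<^sub>m k"
    unfolding s by (rule eq_matI) (simp_all add: index_perm_mat permutations_id perm_mat_def)
  then show ?thesis using conj_eq by blast
qed

end
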